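(* Let $p$ be an odd prime, $n$ a positive integer, $q=p^n$, and let $f$ be a planar function on $\mathbb F_{q^2}$. Let $\theta\in\mathbb F_{q^2}^*$ be such that $\theta^{q+1}$ is a nonsquare in $\mathbb F_q$, and assume that for every $c\in\mathbb F_{q^2}$, \[\#\{x\in\mathbb F_{q^2}:f(x)=c\}=\#\{y\in\mathbb F_{q^2}:y^2=c\}.\] Then the set $\mathcal U_\theta:=\{(x,t\theta):x\in\mathbb F_{q^2},t\in\mathbb F_q\}\cup\{(\infty)\}$ is a unital in $\Pi(f)$. Furthermore, for such $\theta$, $\mathcal U_\theta$ is a unital in $\Pi(f)$ for each of the following planar functions $f$ on $\mathbb F_{q^2}$: (a) $f(x)=x^2$; (b) $f(x)=x^{p^k+1}$, where $k$ is an integer with $1\le k\le n$ and $2n/\gcd(2n,k)$ odd; (c) $f(x)=x^{(3^k+1)/2}$, where $p=3$ and $\gcd(k,2n)=1$.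
   Context: A function $f:\mathbb F_{q^2}\to\mathbb F_{q^2}$ is planar if for every $a\neq 0$ the map $x\mapsto f(x+a)-f(x)$ is a bijection. For planar $f$, $\Pi(f)$ is the projective plane with points $(x,y)\in\mathbb F_{q^2}^2$ and $(a)$ for $a\in\mathbb F_{q^2}\cup\{\infty\}$, and lines $L_{a,b}=\{(x,f(x+a)-b):x\in\mathbb F_{q^2}\}\cup\{(a)\}$ ($a,b\in\mathbb F_{q^2}$), $N_a=\{(a,y):y\in\mathbb F_{q^2}\}\cup\{(\infty)\}$ ($a\in\mathbb F_{q^2}$), $L_\infty=\{(a):a\in\mathbb F_{q^2}\cup\{\infty\}\}$, incidence being membership. A unital in $\Pi(f)$ is a set of $q^3+1$ points meeting every line in exactly $1$ or $q+1$ points. *)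

theory Defs
  imports Main "HOL-Computational_Algebra.Primes"
begin

text \<open>Points of \<Pi>(f): affine points (x,y) and ideal points (a), a \<in> F \<union> {\<infinity>};
  the ideal point (\<infinity>) is Ideal None, the point (a) is Ideal (Some a).\<close>
datatype 'a pl_point = Affine 'a 'a | Ideal "'a option"

datatype 'a pl_line = Lab 'a 'a | Nl 'a | Linf

definition planar :: "('a::field \<Rightarrow> 'a) \<Rightarrow> bool" where
  "planar f \<longleftrightarrow> (\<forall>a. a \<noteq> 0 \<longrightarrow> bij (\<lambda>x. f (x + a) - f x))"

fun line_points :: "('a::field \<Rightarrow> 'a) \<Rightarrow> 'a pl_line \<Rightarrow> 'a pl_point set" where
  "line_points f (Lab a b) = {Affine x (f (x + a) - b) | x. True} \<union> {Ideal (Some a)}"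
| "line_points f (Nl a) = {Affine a y | y. True} \<union> {Ideal None}"
| "line_points f Linf = range Ideal"

text \<open>A unital in \<Pi>(f), where the ambient field is F_{q^2}.\<close>
definition is_unital :: "nat \<Rightarrow> ('a::field \<Rightarrow> 'a) \<Rightarrow> 'a pl_point set \<Rightarrow> bool" where
  "is_unital q f U \<longleftrightarrow> finite U \<and> card U = q ^ 3 + 1 \<and>
     (\<forall>l. card (U \<inter> line_points f l) = 1 \<or> card (U \<inter> line_points f l) = q + 1)"

definition subfield_q :: "nat \<Rightarrow> 'a::field set" where
  "subfield_q q = {x. x ^ q = x}"

definition U_theta :: "nat \<Rightarrow> 'a::field \<Rightarrow> 'a pl_point set" where
  "U_theta q \<theta> = {Affine x (t * \<theta>) | x t. t \<in> subfield_q q} \<union> {Ideal None}"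

end

theory Submission
  imports Defs "HOL-Number_Theory.Residues" "HOL-Computational_Algebra.Polynomial"
    "HOL-Library.Cardinality"
begin

(* The map h w = theta^q * w - theta * w^q is F_q-linear on F_{q^2}, takes values in the
   q-element space {z. z^q = -z} and has kernel F_q * theta.  Hence the affine points of U_theta
   are the (x, y) with h y = 0, and the line L_{a,b} meets U_theta in as many points as there are
   x with h (f (x + a)) = h b; by the fibre hypothesis on f, this is the number of y with
   h (y^2) = h b.  Because theta^(q+1) is a nonsquare in F_q, h (y^2) = 0 only for y = 0; because
   every element of F_q is a square in F_{q^2}, the scalings y |-> mu * y permute the nonzero
   fibres of y |-> h (y^2) transitively, so each of them has (q^2 - 1) / (q - 1) = q + 1 points.
   For the monomials x^d of (a)-(c), d is even and the only d-th roots of unity are +1 and -1,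
   so x |-> x^(d/2) is a bijection and x^d has the same fibre sizes as x^2. *)

lemma power_card_UNIV:
  fixes x :: "'a::{field,finite}"
  shows "x ^ CARD('a) = x"
proof (cases "x = 0")
  case False
  have "x * (\<Prod>y\<in>UNIV-{0}. x * y) = x * x ^ (CARD('a) - 1) * \<Prod>(UNIV-{0})"
    by (simp add: prod.distrib mult_ac)
  also have "x * x ^ (CARD('a) - 1) = x ^ CARD('a)"
    using finite_UNIV_card_ge_0[where ?'a = 'a] by (simp flip: power_Suc)
  also have "(\<Prod>y\<in>UNIV-{0}. x * y) = (\<Prod>y\<in>UNIV-{0}. y)"
    by (rule prod.reindex_bij_witness[of _ "\<lambda>y. y / x" "\<lambda>y. x * y"]) (use False in auto)
  finally show ?thesis
    by simp
qed (use finite_UNIV_card_ge_0[where ?'a = 'a] in auto)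

lemma power_card_UNIV_minus_one:
  fixes x :: "'a::{field,finite}"
  assumes "x \<noteq> 0"
  shows "x ^ (CARD('a) - 1) = 1"
proof -
  have "x ^ (CARD('a) - 1) * x = x"
    using power_card_UNIV[of x] finite_UNIV_card_ge_0[where ?'a = 'a] by (simp flip: power_Suc2)
  then show ?thesis
    using assms by simp
qed

lemma card_power_eq_poly_le:
  fixes r :: "'a::idom poly"
  assumes "degree r < m"
  shows "card {x. x ^ m = poly r x} \<le> m"
proof -
  have deg: "degree (monom 1 m + - r) = m"
    using assms degree_add_eq_left[of "- r" "monom 1 m"] by (simp add: degree_monom_eq)
  then have "monom 1 m + - r \<noteq> 0"
    using assms by auto
  moreover have "{x. x ^ m = poly r x} = {x. poly (monom 1 m + - r) x = 0}"
    by (simp add: poly_monom)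
  ultimately show ?thesis
    using card_poly_roots_bound deg by metis
qed

lemma card_vimage_eq_sum:
  fixes f :: "'a::finite \<Rightarrow> 'b"
  assumes "finite S"
  shows "card (f -` S) = (\<Sum>c\<in>S. card (f -` {c}))"
proof -
  have "f -` S = (\<Union>c\<in>S. f -` {c})"
    by auto
  then show ?thesis
    using assms by (simp only:) (rule card_UN_disjoint, auto)
qed

lemma card_vimage_eq_if_card_fibres_eq:
  fixes f g :: "'a::finite \<Rightarrow> 'b::finite"
  assumes "\<And>c. card (f -` {c}) = card (g -` {c})"
  shows "card (f -` S) = card (g -` S)"
  using card_vimage_eq_sum[of S f] card_vimage_eq_sum[of S g] assms by simp

lemma card_UNIV_eq_card_range_times_card_kernel:
  fixes \<phi> :: "'a::{ab_group_add,finite} \<Rightarrow> 'b::ab_group_add"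
  assumes diff: "\<And>x y. \<phi> (x - y) = \<phi> x - \<phi> y"
  shows "CARD('a) = card (range \<phi>) * card {x. \<phi> x = 0}"
proof -
  have fibre: "card (\<phi> -` {\<phi> x}) = card {x. \<phi> x = 0}" for x
  proof -
    have "\<phi> -` {\<phi> x} = (\<lambda>t. t + x) ` {x. \<phi> x = 0}"
    proof (intro equalityI subsetI)
      fix y
      assume "y \<in> \<phi> -` {\<phi> x}"
      then have "\<phi> (y - x) = 0"
        by (simp add: diff)
      then show "y \<in> (\<lambda>t. t + x) ` {x. \<phi> x = 0}"
        by (intro image_eqI[of _ _ "y - x"]) auto
    next
      fix y
      assume "y \<in> (\<lambda>t. t + x) ` {x. \<phi> x = 0}"
      then show "y \<in> \<phi> -` {\<phi> x}"
        using diff[of "y" x] by auto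
    qed
    then show ?thesis
      by (simp add: card_image)
  qed
  have "\<phi> -` range \<phi> = UNIV"
    by blast
  then have "CARD('a) = (\<Sum>c\<in>range \<phi>. card (\<phi> -` {c}))"
    using card_vimage_eq_sum[of "range \<phi>" \<phi>] by simp
  also have "\<dots> = (\<Sum>c\<in>range \<phi>. card {x. \<phi> x = 0})"
    by (intro sum.cong refl) (clarsimp simp: fibre)
  also have "\<dots> = card (range \<phi>) * card {x. \<phi> x = 0}"
    by simp
  finally show ?thesis .
qed

lemma card_nonzero_squares:
  assumes "(2::'a::{field,finite}) \<noteq> 0"
  shows "CARD('a) = 2 * card ((\<lambda>y::'a. y ^ 2) ` (UNIV - {0})) + 1"
proof -
  define Sq where "Sq = (\<lambda>y::'a. y ^ 2) ` (UNIV - {0})"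
  have fibre_Sq: "card ((\<lambda>y::'a. y ^ 2) -` {c}) = 2" if c: "c \<in> Sq" for c
  proof -
    obtain y where y: "y \<noteq> 0" "c = y ^ 2"
      using c unfolding Sq_def by blast
    have "(\<lambda>y::'a. y ^ 2) -` {c} = {y, -y}"
      by (auto simp: y(2) power2_eq_iff)
    moreover have "y \<noteq> - y"
    proof
      assume "y = - y"
      then have "2 * y = 0"
        by (simp only: mult_2 eq_neg_iff_add_eq_0)
      then show False
        using y(1) assms by simp
    qed
    ultimately show ?thesis
      by simp
  qed
  have "0 \<notin> Sq"
    by (auto simp: Sq_def)
  have "x ^ 2 \<in> insert 0 Sq" for x :: 'a
    by (cases "x = 0") (simp_all add: Sq_def)
  then have "(\<lambda>y::'a. y ^ 2) -` insert 0 Sq = UNIV"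
    by blast
  then have "CARD('a) = (\<Sum>c\<in>insert 0 Sq. card ((\<lambda>y::'a. y ^ 2) -` {c}))"
    using card_vimage_eq_sum[of "insert 0 Sq" "\<lambda>y::'a. y ^ 2"] by simp
  also have "\<dots> = card ((\<lambda>y::'a. y ^ 2) -` {0}) + (\<Sum>c\<in>Sq. card ((\<lambda>y::'a. y ^ 2) -` {c}))"
    using \<open>0 \<notin> Sq\<close> by simp
  also have "(\<lambda>y::'a. y ^ 2) -` {0} = {0}"
    by auto
  also have "(\<Sum>c\<in>Sq. card ((\<lambda>y::'a. y ^ 2) -` {c})) = (\<Sum>c\<in>Sq. 2)"
    using fibre_Sq by (rule sum.cong[OF refl])
  finally show ?thesis
    by (simp add: Sq_def)
qed

lemma nonzero_square_iff_power:
  fixes x :: "'a::{field,finite}"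
  assumes two: "(2::'a) \<noteq> 0" and "x \<noteq> 0"
  shows "(\<exists>y. y ^ 2 = x) \<longleftrightarrow> x ^ ((CARD('a) - 1) div 2) = 1"
proof -
  define m where "m = (CARD('a) - 1) div 2"
  define Sq where "Sq = (\<lambda>y::'a. y ^ 2) ` (UNIV - {0})"
  have card_Sq: "card Sq = m" and m: "CARD('a) - 1 = 2 * m"
    using card_nonzero_squares[OF two] by (simp_all add: Sq_def m_def)
  have Sq_roots: "Sq \<subseteq> {x. x ^ m = 1}"
  proof
    fix c
    assume "c \<in> Sq"
    then obtain y where "y \<noteq> 0" "c = y ^ 2"
      unfolding Sq_def by blast
    then show "c \<in> {x. x ^ m = 1}"
      using power_card_UNIV_minus_one[of y] m by (simp flip: power_mult)
  qed
  have "1 \<in> Sq"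
    unfolding Sq_def by (rule image_eqI[of _ _ 1]) simp_all
  then have "card Sq > 0"
    by (auto simp: card_gt_0_iff)
  then have "m > 0"
    using card_Sq by simp
  then have "card {x::'a. x ^ m = 1} \<le> m"
    using card_power_eq_poly_le[of "[:1:]" m] by simp
  then have "Sq = {x. x ^ m = 1}"
    using card_Sq by (intro card_seteq[OF finite Sq_roots]) simp
  moreover have "(\<exists>y. y ^ 2 = x) \<longleftrightarrow> x \<in> Sq"
    using \<open>x \<noteq> 0\<close> by (auto simp: Sq_def image_iff)
  ultimately show ?thesis
    by (simp add: m_def)
qed

lemma inj_power_if_trivial_roots_of_unity:
  assumes "e > 0" and roots: "\<And>u::'a::field. u ^ e = 1 \<Longrightarrow> u = 1"
  shows "inj (\<lambda>x::'a. x ^ e)"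
proof (rule injI)
  fix x z :: 'a
  assume xz: "x ^ e = z ^ e"
  show "x = z"
  proof (cases "z = 0")
    case True
    then show ?thesis
      using xz \<open>e > 0\<close> by (simp add: zero_power)
  next
    case False
    then have "(x / z) ^ e = 1"
      using xz by (simp add: power_divide)
    then have "x / z = 1"
      by (rule roots)
    then show ?thesis
      using False by simp
  qed
qed

lemma card_power_fibre_eq_card_square_fibre:
  fixes c :: "'a::{field,finite}"
  assumes two: "(2::'a) \<noteq> 0" and i: "i ^ 2 = (-1::'a)" and "even d"
    and roots: "\<And>x::'a. x ^ d = 1 \<Longrightarrow> x ^ 2 = 1"
  shows "card ((\<lambda>x. x ^ d) -` {c}) = card ((\<lambda>y. y ^ 2) -` {c})"
proof -
  obtain e where d: "d = 2 * e"
    using \<open>even d\<close> by blast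
  have minus_one_ne_one: "(-1::'a) \<noteq> 1"
  proof
    assume "(-1::'a) = 1"
    then have "(2::'a) = 0"
      by (metis add.left_inverse one_add_one)
    then show False
      using two by simp
  qed
  have "odd e"
  proof
    assume "even e"
    then have "i ^ d = 1"
      using i by (auto simp: d power_mult elim!: evenE)
    then show False
      using roots[of i] i minus_one_ne_one by simp
  qed
  have "u = 1" if u: "u ^ e = 1" for u :: 'a
  proof -
    have "u ^ 2 = 1"
      using roots[of u] u by (simp add: d power_mult mult.commute)
    moreover have "u \<noteq> -1"
      using u \<open>odd e\<close> minus_one_ne_one by auto
    ultimately show "u = 1"
      using power2_eq_1_iff by blast
  qed
  then have "inj (\<lambda>x::'a. x ^ e)"
    using \<open>odd e\<close> by (intro inj_power_if_trivial_roots_of_unity) (simp_all add: odd_pos)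
  moreover have "(\<lambda>x. x ^ d) -` {c} = (\<lambda>x. x ^ e) -` ((\<lambda>y. y ^ 2) -` {c})"
    by (auto simp: d power_mult mult.commute)
  ultimately show ?thesis
    using finite_UNIV_inj_surj[of "\<lambda>x::'a. x ^ e"] by (simp add: card_vimage_inj)
qed

lemma power_power_eq_self:
  fixes x :: "'a::monoid_mult"
  assumes "x ^ r = x"
  shows "x ^ (r ^ j) = x"
proof (induction j)
  case (Suc j)
  then show ?case
    using assms by (simp add: power_mult mult.commute)
qed simp

lemma power_power_eq_inverse:
  fixes x :: "'a::field"
  assumes "x ^ r = inverse x"
  shows "x ^ (r ^ j) = (if even j then x else inverse x)"
proof (induction j)
  case (Suc j)
  have "x ^ (r ^ Suc j) = (x ^ (r ^ j)) ^ r"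
    by (simp only: power_Suc2 power_mult)
  then show ?case
    using Suc assms by (simp add: power_inverse)
qed simp

lemma power_prime_power_gcd:
  fixes x :: "'a::monoid_mult"
  assumes "x ^ (p ^ N) = x" and "k \<noteq> 0"
  shows "\<exists>j. x ^ (p ^ gcd k N) = x ^ ((p ^ k) ^ j)"
proof -
  obtain j l where jl: "k * j = N * l + gcd k N"
    using bezout_nat[OF assms(2)] by blast
  have "x ^ ((p ^ k) ^ j) = (x ^ ((p ^ N) ^ l)) ^ (p ^ gcd k N)"
    by (simp add: jl power_add power_mult flip: power_mult)
  also have "x ^ ((p ^ N) ^ l) = x"
    using power_power_eq_self[OF assms(1)] .
  finally show ?thesis
    by metis
qed

lemma power_prime_power_gcd_cases:
  fixes x :: "'a::field"
  assumes "x ^ (p ^ N) = x" and "k \<noteq> 0" and "x ^ (p ^ k) = inverse x"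
  shows "x ^ (p ^ gcd k N) = x \<or> x ^ (p ^ gcd k N) = inverse x"
proof -
  obtain j where "x ^ (p ^ gcd k N) = x ^ ((p ^ k) ^ j)"
    using power_prime_power_gcd[OF assms(1,2)] by blast
  then show ?thesis
    using power_power_eq_inverse[OF assms(3), of j] by simp
qed

lemma self_inverse_imp_square_eq_one:
  fixes x :: "'a::field"
  assumes "x = inverse x" and "x \<noteq> 0"
  shows "x ^ 2 = 1"
proof -
  have "x * x = 1"
    by (subst (2) assms(1)) (simp add: assms(2))
  then show ?thesis
    by (simp add: power2_eq_square)
qed

lemma square_eq_one_if_power_prime_power_plus_one_eq_one:
  fixes x :: "'a::field"
  assumes frob: "x ^ (p ^ N) = x" and "k \<noteq> 0" and odd_quotient: "odd (N div gcd N k)"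
    and x: "x ^ (p ^ k + 1) = 1"
  shows "x ^ 2 = 1"
proof -
  have "x \<noteq> 0"
    using x by (auto simp: power_0_left)
  have inv: "x ^ (p ^ k) = inverse x"
    using x \<open>x \<noteq> 0\<close> by (simp add: field_simps)
  define g where "g = gcd k N"
  have "x = inverse x"
    using power_prime_power_gcd_cases[OF frob \<open>k \<noteq> 0\<close> inv]
  proof (elim disjE, fold g_def)
    assume xg: "x ^ (p ^ g) = x"
    obtain k' where "k = g * k'"
      unfolding g_def by (metis gcd_dvd1 dvdE)
    then have "x ^ (p ^ k) = x"
      using power_power_eq_self[OF xg, of k'] by (simp add: power_mult)
    then show ?thesis
      using inv by simp
  next
    assume xg: "x ^ (p ^ g) = inverse x"
    obtain m where N: "N = g * m" and "odd m"
      using odd_quotient unfolding g_def by (metis dvd_mult_div_cancel gcd.commute gcd_dvd2)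
    have "x ^ (p ^ N) = inverse x"
      using power_power_eq_inverse[OF xg, of m] \<open>odd m\<close> by (simp add: N power_mult)
    then show ?thesis
      using frob by simp
  qed
  then show ?thesis
    using \<open>x \<noteq> 0\<close> by (rule self_inverse_imp_square_eq_one)
qed

lemma three_power_odd_half_mod_four:
  assumes "odd k"
  shows "((3::nat) ^ k + 1) div 2 mod 4 = 2"
proof -
  obtain i where k: "k = 2 * i + 1"
    using assms oddE by blast
  have "(9::nat) ^ i mod 8 = 1"
    using power_mod[of "9::nat" 8 i] by simp
  then have "(3::nat) ^ k mod 8 = 3"
    by (simp add: k power_add power_mult mod_mult_right_eq[of 3, symmetric])
  then show ?thesis
    by presburger
qed

lemma square_eq_one_if_power_three_half_eq_one:
  fixes x :: "'a::field"
  assumes frob: "x ^ (3 ^ N) = x" and "gcd k N = 1" and "odd k"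
    and x: "x ^ ((3 ^ k + 1) div 2) = 1"
  shows "x ^ 2 = 1"
proof -
  define D where "D = ((3::nat) ^ k + 1) div 2"
  have D_mod: "D mod 4 = 2"
    unfolding D_def using \<open>odd k\<close> by (rule three_power_odd_half_mod_four)
  have D: "(3::nat) ^ k + 1 = 2 * D"
    unfolding D_def by simp
  have "x \<noteq> 0"
    using x by (auto simp: power_0_left)
  have "x ^ (3 ^ k + 1) = (x ^ D) ^ 2"
    unfolding D by (simp add: mult.commute flip: power_mult)
  also have "x ^ D = 1"
    using x unfolding D_def .
  finally have "x * x ^ (3 ^ k) = 1"
    by simp
  then have inv: "x ^ (3 ^ k) = inverse x"
    by (simp add: inverse_unique)
  have "k \<noteq> 0"
    using \<open>odd k\<close> by presburger
  have "x ^ 3 = x \<or> x ^ 3 = inverse x"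
    using power_prime_power_gcd_cases[OF frob \<open>k \<noteq> 0\<close> inv] \<open>gcd k N = 1\<close> by simp
  then have "x ^ 2 = 1 \<or> x ^ 4 = 1"
    using \<open>x \<noteq> 0\<close> by (auto simp: numeral_eq_Suc field_simps)
  moreover have "x ^ D = (x ^ 4) ^ (D div 4) * x ^ 2"
    using D_mod by (metis div_mult_mod_eq power_add power_mult mult.commute)
  ultimately show ?thesis
    using x by (auto simp: D_def)
qed

lemma mem_subfield_q_iff: "x \<in> subfield_q q \<longleftrightarrow> x ^ q = x"
  by (simp add: subfield_q_def)

locale gf_q2 =
  fixes q :: nat and field_type :: "'a::{field,finite} itself"
  assumes card_UNIV: "CARD('a) = q ^ 2"
    and power_q_add: "\<And>x y :: 'a. (x + y) ^ q = x ^ q + y ^ q"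
    and odd_q: "odd q" and q_ge_3: "q \<ge> 3"
    and two_ne_zero: "(2::'a) \<noteq> 0"
begin

lemma power_q_minus: "(- x :: 'a) ^ q = - (x ^ q)"
  using odd_q by simp

lemma power_q_diff: "(x - y :: 'a) ^ q = x ^ q - y ^ q"
  using power_q_add[of x "- y"] by (simp add: power_q_minus)

lemma power_q_times_q: "(x :: 'a) ^ (q * q) = x"
  using power_card_UNIV[of x] by (simp add: card_UNIV power2_eq_square)

lemma power_q_q: "((x :: 'a) ^ q) ^ q = x"
  by (simp add: power_q_times_q flip: power_mult)

lemma power_prime_power_double_exp:
  assumes "q = p ^ n"
  shows "(x :: 'a) ^ (p ^ (2 * n)) = x"
proof -
  have "p ^ (2 * n) = q * q"
    unfolding assms by (simp add: mult_2 flip: power_add)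
  then show ?thesis
    by (simp add: power_q_times_q)
qed

abbreviation Fq :: "'a set" where
  "Fq \<equiv> subfield_q q"

definition trace_zero :: "'a set" where
  "trace_zero = {z. z ^ q = - z}"

lemma card_subfield_q_and_trace_zero:
  "card Fq = q \<and> card trace_zero = q"
proof -
  define \<phi> :: "'a \<Rightarrow> 'a" where "\<phi> x = x ^ q - x" for x
  have "{x::'a. x ^ q = poly [:0, 1:] x} = Fq"
    by (simp add: subfield_q_def)
  then have F_le: "card Fq \<le> q"
    using card_power_eq_poly_le[of "[:0, 1:] :: 'a poly" q] q_ge_3 by simp
  have "{x::'a. x ^ q = poly [:0, -1:] x} = trace_zero"
    by (simp add: trace_zero_def)
  then have V_le: "card trace_zero \<le> q"
    using card_power_eq_poly_le[of "[:0, -1:] :: 'a poly" q] q_ge_3 by simp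
  have "range \<phi> \<subseteq> trace_zero"
    by (auto simp: trace_zero_def \<phi>_def power_q_diff power_q_q)
  then have range_le: "card (range \<phi>) \<le> card trace_zero"
    by (simp add: card_mono)
  have "{x. \<phi> x = 0} = Fq"
    by (simp add: \<phi>_def subfield_q_def)
  then have "q * q = card (range \<phi>) * card Fq"
    using card_UNIV_eq_card_range_times_card_kernel[of \<phi>]
    by (simp add: \<phi>_def power_q_diff card_UNIV power2_eq_square)
  also have "\<dots> \<le> card trace_zero * card Fq"
    using range_le by simp
  finally have "q * q \<le> card trace_zero * card Fq" .
  then have "q * q \<le> q * card Fq" and "q * q \<le> card trace_zero * q"
    using F_le V_le mult_le_mono1 mult_le_mono2 order_trans by blast+
  then show ?thesis
    using F_le V_le q_ge_3 by simp
qed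

lemma card_subfield_q: "card Fq = q"
  using card_subfield_q_and_trace_zero by simp

lemma card_trace_zero: "card trace_zero = q"
  using card_subfield_q_and_trace_zero by simp

lemma square_of_mem_subfield_q:
  assumes "s \<in> Fq"
  shows "\<exists>\<mu>::'a. \<mu> ^ 2 = s"
proof (cases "s = 0")
  case False
  obtain r where r: "q = 2 * r + 1"
    using odd_q oddE by blast
  have s_unit: "s ^ (2 * r) = 1"
    using assms False r by (simp add: mem_subfield_q_iff)
  have "(CARD('a) - 1) div 2 = 2 * r * (r + 1)"
    by (simp add: card_UNIV r power2_eq_square algebra_simps)
  then have "s ^ ((CARD('a) - 1) div 2) = (s ^ (2 * r)) ^ (r + 1)"
    by (simp only: power_mult)
  then have "s ^ ((CARD('a) - 1) div 2) = 1"
    by (simp add: s_unit)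
  then show ?thesis
    using nonzero_square_iff_power[OF two_ne_zero False] by simp
qed auto

lemma exists_sqrt_minus_one: "\<exists>i::'a. i ^ 2 = -1"
  using square_of_mem_subfield_q[of "-1"] power_q_minus[of 1] by (simp add: mem_subfield_q_iff)

end

lemma gf_q2_prime_power:
  fixes p n :: nat
  assumes p: "prime p" "odd p" and "n > 0" and card: "CARD('a::{field,finite}) = (p ^ n) ^ 2"
  shows "gf_q2 TYPE('a) (p ^ n)"
proof
  have "prime CHAR('a)"
    by (rule prime_CHAR_semidom) (simp add: finite_imp_CHAR_pos)
  moreover have "CHAR('a) dvd p ^ (n * 2)"
    using CHAR_dvd_CARD[where 'a='a] card by (simp add: power_mult)
  ultimately have char: "CHAR('a) = p"
    using p(1) \<open>n > 0\<close> by (simp add: prime_dvd_power_iff primes_dvd_imp_eq)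
  have "p \<ge> 3"
    using p prime_ge_2_nat[of p] by presburger
  show "(x + y) ^ (p ^ n) = x ^ (p ^ n) + y ^ (p ^ n)" for x y :: 'a
    by (rule freshmans_dream') (simp_all add: char p(1))
  show "CARD('a) = (p ^ n) ^ 2"
    by (fact card)
  show "odd (p ^ n)"
    using p(2) by simp
  show "p ^ n \<ge> 3"
    using \<open>p \<ge> 3\<close> \<open>n > 0\<close> self_le_power[of p n] by simp
  show "(2::'a) \<noteq> 0"
  proof
    assume "(2::'a) = 0"
    then have "p dvd 2"
      using of_nat_eq_0_iff_char_dvd[of 2, where 'a='a] char by simp
    then show False
      using \<open>p \<ge> 3\<close> by (auto dest: dvd_imp_le)
  qed
qed

locale U_theta_setting = gf_q2 q field_type for q and field_type :: "'a::{field,finite} itself" +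
  fixes \<theta> :: 'a
  assumes theta_ne_zero: "\<theta> \<noteq> 0"
    and theta_norm_nonsquare: "\<not> (\<exists>y \<in> subfield_q q. y ^ 2 = \<theta> ^ (q + 1))"
begin

definition h :: "'a \<Rightarrow> 'a" where
  "h w = \<theta> ^ q * w - \<theta> * w ^ q"

definition h_sq :: "'a \<Rightarrow> 'a" where
  "h_sq y = h (y ^ 2)"

lemma h_diff: "h (x - y) = h x - h y"
  by (simp add: h_def power_q_diff algebra_simps)

lemma h_eq_0_iff: "h w = 0 \<longleftrightarrow> (\<exists>t \<in> Fq. w = t * \<theta>)"
proof
  assume "h w = 0"
  then have w_q: "w ^ q = \<theta> ^ q * w / \<theta>"
    using theta_ne_zero by (simp add: h_def field_simps)
  have "(w / \<theta>) ^ q = w / \<theta>"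
    using theta_ne_zero by (simp add: power_divide w_q)
  then show "\<exists>t \<in> Fq. w = t * \<theta>"
    using theta_ne_zero by (intro bexI[of _ "w / \<theta>"]) (simp_all add: mem_subfield_q_iff)
next
  assume "\<exists>t \<in> Fq. w = t * \<theta>"
  then show "h w = 0"
    by (auto simp: h_def mem_subfield_q_iff power_mult_distrib)
qed

lemma h_mem_trace_zero: "h w \<in> trace_zero"
  by (simp add: trace_zero_def h_def power_q_diff power_mult_distrib power_q_q)

lemma Affine_mem_U_theta_iff: "Affine x y \<in> U_theta q \<theta> \<longleftrightarrow> h y = 0"
  by (auto simp: U_theta_def h_eq_0_iff)

lemma card_h_kernel: "card {y. h y = 0} = q"
proof -
  have "{y. h y = 0} = (\<lambda>t. t * \<theta>) ` Fq"
    by (auto simp: h_eq_0_iff)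
  moreover have "inj_on (\<lambda>t. t * \<theta>) Fq"
    using theta_ne_zero by (auto simp: inj_on_def)
  ultimately show ?thesis
    by (simp add: card_image card_subfield_q)
qed

lemma h_sq_eq_0_iff: "h_sq y = 0 \<longleftrightarrow> y = 0"
proof
  assume "h_sq y = 0"
  then obtain t where t: "t \<in> Fq" "y ^ 2 = t * \<theta>"
    by (auto simp: h_sq_def h_eq_0_iff)
  show "y = 0"
  proof (rule ccontr)
    assume "y \<noteq> 0"
    then have "t \<noteq> 0"
      using t(2) by auto
    have t_q: "t ^ q = t"
      using t(1) by (simp add: mem_subfield_q_iff)
    define z where "z = y ^ (q + 1) / t"
    have "(y ^ (q + 1)) ^ q = y ^ (q + 1)"
      by (simp add: power_mult_distrib power_q_q)
    then have "z \<in> Fq"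
      by (simp add: z_def power_divide t_q mem_subfield_q_iff)
    have "(y ^ (q + 1)) ^ 2 = (y ^ 2) ^ (q + 1)"
      by (simp only: mult.commute flip: power_mult)
    then have "z ^ 2 = (y ^ 2) ^ (q + 1) / t ^ 2"
      by (simp only: z_def power_divide)
    also have "\<dots> = t ^ (q + 1) * \<theta> ^ (q + 1) / t ^ 2"
      by (simp only: t(2) power_mult_distrib)
    also have "t ^ (q + 1) = t ^ 2"
      using t_q by (simp add: power2_eq_square)
    also have "t ^ 2 * \<theta> ^ (q + 1) / t ^ 2 = \<theta> ^ (q + 1)"
      using \<open>t \<noteq> 0\<close> by simp
    finally show False
      using theta_norm_nonsquare \<open>z \<in> Fq\<close> by blast
  qed
qed (use q_ge_3 in \<open>simp add: h_sq_def h_def\<close>)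

lemma h_sq_mult:
  assumes "l ^ 2 \<in> Fq"
  shows "h_sq (l * y) = l ^ 2 * h_sq y"
  using assms by (simp add: h_sq_def h_def mem_subfield_q_iff power_mult_distrib algebra_simps)

lemma trace_zero_eq_image:
  assumes "\<beta> \<in> trace_zero" and "\<beta> \<noteq> 0"
  shows "trace_zero = (\<lambda>s. s * \<beta>) ` Fq"
proof -
  have "(\<lambda>s. s * \<beta>) ` Fq \<subseteq> trace_zero"
    using assms(1) by (auto simp: trace_zero_def mem_subfield_q_iff power_mult_distrib)
  moreover have "inj_on (\<lambda>s. s * \<beta>) Fq"
    using assms(2) by (auto simp: inj_on_def)
  then have "card ((\<lambda>s. s * \<beta>) ` Fq) = card trace_zero"
    by (simp add: card_image card_subfield_q card_trace_zero)
  ultimately show ?thesis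
    by (intro card_seteq[symmetric]) simp_all
qed

lemma card_h_sq_fibre_mult:
  assumes "s \<in> Fq" and "s \<noteq> 0"
  shows "card (h_sq -` {s * \<beta>}) = card (h_sq -` {\<beta>})"
proof -
  obtain \<mu> where \<mu>: "\<mu> ^ 2 = s"
    using square_of_mem_subfield_q[OF assms(1)] by blast
  then have "\<mu> \<noteq> 0"
    using assms(2) by auto
  have inverse_\<mu>: "inverse \<mu> ^ 2 \<in> Fq"
    using assms(1) \<mu> by (simp add: mem_subfield_q_iff power_inverse)
  have "h_sq -` {s * \<beta>} = (\<lambda>y. \<mu> * y) ` (h_sq -` {\<beta>})"
  proof (intro equalityI subsetI)
    fix x
    assume "x \<in> h_sq -` {s * \<beta>}"
    then have "h_sq (inverse \<mu> * x) = \<beta>"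
      using h_sq_mult[OF inverse_\<mu>] \<mu> assms(2) by (simp add: power_inverse)
    moreover have "x = \<mu> * (inverse \<mu> * x)"
      using \<open>\<mu> \<noteq> 0\<close> by simp
    ultimately show "x \<in> (\<lambda>y. \<mu> * y) ` (h_sq -` {\<beta>})"
      by (intro image_eqI[of _ _ "inverse \<mu> * x"]) simp_all
  next
    fix x
    assume "x \<in> (\<lambda>y. \<mu> * y) ` (h_sq -` {\<beta>})"
    then show "x \<in> h_sq -` {s * \<beta>}"
      using h_sq_mult[of \<mu>] assms(1) \<mu> by auto
  qed
  moreover have "inj_on (\<lambda>y. \<mu> * y) (h_sq -` {\<beta>})"
    using \<open>\<mu> \<noteq> 0\<close> by (auto simp: inj_on_def)
  ultimately show ?thesis
    by (simp add: card_image)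
qed

lemma card_h_sq_fibre:
  assumes "\<beta> \<in> trace_zero" and "\<beta> \<noteq> 0"
  shows "card (h_sq -` {\<beta>}) = q + 1"
proof -
  define S where "S = (\<lambda>s. s * \<beta>) ` (Fq - {0})"
  have "h_sq -` S = UNIV - {0}"
  proof (intro equalityI subsetI)
    fix y :: 'a
    assume "y \<in> h_sq -` S"
    then show "y \<in> UNIV - {0}"
      using assms(2) h_sq_eq_0_iff[of y] by (auto simp: S_def)
  next
    fix y :: 'a
    assume "y \<in> UNIV - {0}"
    then have "h_sq y \<noteq> 0"
      by (simp add: h_sq_eq_0_iff)
    moreover have "h_sq y \<in> (\<lambda>s. s * \<beta>) ` Fq"
      using h_mem_trace_zero trace_zero_eq_image[OF assms] by (simp add: h_sq_def)
    ultimately show "y \<in> h_sq -` S"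
      by (auto simp: S_def)
  qed
  then have "q * q - 1 = (\<Sum>c\<in>S. card (h_sq -` {c}))"
    using card_vimage_eq_sum[of S h_sq] by (simp add: card_UNIV power2_eq_square)
  also have "\<dots> = (\<Sum>c\<in>S. card (h_sq -` {\<beta>}))"
    by (intro sum.cong refl) (auto simp: S_def intro: card_h_sq_fibre_mult)
  also have "\<dots> = (q - 1) * card (h_sq -` {\<beta>})"
  proof -
    have "inj_on (\<lambda>s. s * \<beta>) (Fq - {0})"
      using assms(2) by (auto simp: inj_on_def)
    moreover have "(0::'a) \<in> Fq"
      using q_ge_3 by (simp add: mem_subfield_q_iff)
    ultimately show ?thesis
      by (simp add: S_def card_image card_subfield_q)
  qed
  also have "q * q - 1 = (q - 1) * (q + 1)"
    by (simp add: diff_mult_distrib algebra_simps)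
  finally have "(q - 1) * (q + 1) = (q - 1) * card (h_sq -` {\<beta>})" .
  moreover have "q - 1 \<noteq> 0"
    using q_ge_3 by simp
  ultimately show ?thesis
    by (metis mult_cancel1)
qed

lemma card_h_sq_fibre_h:
  "card (h_sq -` {h b}) = 1 \<or> card (h_sq -` {h b}) = q + 1"
proof (cases "h b = 0")
  case True
  then have "h_sq -` {h b} = {0}"
    using h_sq_eq_0_iff by auto
  then show ?thesis
    by simp
next
  case False
  then show ?thesis
    using card_h_sq_fibre[OF h_mem_trace_zero] by simp
qed

lemma card_U_theta: "finite (U_theta q \<theta>) \<and> card (U_theta q \<theta>) = q ^ 3 + 1"
proof -
  have U: "U_theta q \<theta> = insert (Ideal None) ((\<lambda>(x, t). Affine x (t * \<theta>)) ` (UNIV \<times> Fq))"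
    by (auto simp: U_theta_def)
  have "inj_on (\<lambda>(x, t). Affine x (t * \<theta>)) (UNIV \<times> Fq)"
    using theta_ne_zero by (auto simp: inj_on_def)
  then have "card ((\<lambda>(x, t). Affine x (t * \<theta>)) ` (UNIV \<times> Fq)) = q ^ 3"
    by (simp add: card_image card_cartesian_product card_UNIV card_subfield_q power_numeral_reduce)
  then show ?thesis
    unfolding U by (subst card_insert_disjoint) auto
qed

lemma card_U_theta_inter_Lab:
  assumes fibres: "\<And>c. card (f -` {c}) = card ((\<lambda>y::'a. y ^ 2) -` {c})"
  shows "card (U_theta q \<theta> \<inter> line_points f (Lab a b)) = card (h_sq -` {h b})"
proof -
  have "Ideal (Some a) \<notin> U_theta q \<theta>"
    by (simp add: U_theta_def)
  then have "U_theta q \<theta> \<inter> line_points f (Lab a b)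
      = (\<lambda>x. Affine x (f (x + a) - b)) ` {x. h (f (x + a) - b) = 0}"
    by (auto simp: Affine_mem_U_theta_iff)
  also have "{x. h (f (x + a) - b) = 0} = (\<lambda>x. x + a) -` (f -` (h -` {h b}))"
    by (auto simp: h_diff)
  finally have "U_theta q \<theta> \<inter> line_points f (Lab a b)
      = (\<lambda>x. Affine x (f (x + a) - b)) ` ((\<lambda>x. x + a) -` (f -` (h -` {h b})))" .
  moreover have "inj (\<lambda>x. Affine x (f (x + a) - b))"
    by (auto simp: inj_on_def)
  ultimately have "card (U_theta q \<theta> \<inter> line_points f (Lab a b))
      = card ((\<lambda>x. x + a) -` (f -` (h -` {h b})))"
    by (simp add: card_image inj_on_subset)
  also have "\<dots> = card (f -` (h -` {h b}))"
    by (rule card_vimage_inj) (auto simp: inj_on_def image_iff intro: exI[of _ "_ - a"])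
  also have "\<dots> = card ((\<lambda>y. y ^ 2) -` (h -` {h b}))"
    using fibres by (rule card_vimage_eq_if_card_fibres_eq)
  also have "(\<lambda>y. y ^ 2) -` (h -` {h b}) = h_sq -` {h b}"
    by (auto simp: h_sq_def)
  finally show ?thesis .
qed

lemma U_theta_is_unital:
  assumes "\<And>c. card (f -` {c}) = card ((\<lambda>y::'a. y ^ 2) -` {c})"
  shows "is_unital q f (U_theta q \<theta>)"
  unfolding is_unital_def
proof (intro conjI allI)
  show "finite (U_theta q \<theta>)" "card (U_theta q \<theta>) = q ^ 3 + 1"
    using card_U_theta by simp_all
next
  fix l
  show "card (U_theta q \<theta> \<inter> line_points f l) = 1 \<or> card (U_theta q \<theta> \<inter> line_points f l) = q + 1"
  proof (cases l)
    case (Lab a b)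
    then show ?thesis
      using card_U_theta_inter_Lab[OF assms] card_h_sq_fibre_h by simp
  next
    case (Nl a)
    have "U_theta q \<theta> \<inter> line_points f l = insert (Ideal None) (Affine a ` {y. h y = 0})"
      by (auto simp: Nl Affine_mem_U_theta_iff) (auto simp: U_theta_def)
    moreover have "card (Affine a ` {y. h y = 0}) = q"
      by (simp add: card_image inj_on_def card_h_kernel)
    ultimately show ?thesis
      by (simp add: card_insert_if image_iff)
  next
    case Linf
    then have "U_theta q \<theta> \<inter> line_points f l = {Ideal None}"
      by (auto simp: U_theta_def)
    then show ?thesis
      by simp
  qed
qed

lemma power_is_unital:
  assumes "even d" and "\<And>x::'a. x ^ d = 1 \<Longrightarrow> x ^ 2 = 1"
  shows "is_unital q (\<lambda>x. x ^ d) (U_theta q \<theta>)"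
proof -
  obtain i :: 'a where "i ^ 2 = -1"
    using exists_sqrt_minus_one by blast
  then show ?thesis
    by (intro U_theta_is_unital card_power_fibre_eq_card_square_fibre[OF two_ne_zero _ assms])
qed

lemma power_prime_power_plus_one_is_unital:
  assumes "q = p ^ n" and "odd p" and "k \<noteq> 0" and "odd (2 * n div gcd (2 * n) k)"
  shows "is_unital q (\<lambda>x. x ^ (p ^ k + 1)) (U_theta q \<theta>)"
proof (rule power_is_unital)
  show "even (p ^ k + 1)"
    using \<open>odd p\<close> by simp
next
  fix x :: 'a
  assume "x ^ (p ^ k + 1) = 1"
  then show "x ^ 2 = 1"
    using power_prime_power_double_exp[OF assms(1)] assms(3,4)
    by (intro square_eq_one_if_power_prime_power_plus_one_eq_one)
qed

lemma power_three_half_is_unital: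
  assumes "q = 3 ^ n" and k: "gcd k (2 * n) = 1"
  shows "is_unital q (\<lambda>x. x ^ ((3 ^ k + 1) div 2)) (U_theta q \<theta>)"
proof (rule power_is_unital)
  have "odd k"
  proof
    assume "even k"
    then have "2 dvd gcd k (2 * n)"
      by simp
    then show False
      using k by simp
  qed
  then show "even (((3::nat) ^ k + 1) div 2)"
    using three_power_odd_half_mod_four[OF \<open>odd k\<close>] by presburger
  fix x :: 'a
  assume "x ^ ((3 ^ k + 1) div 2) = 1"
  then show "x ^ 2 = 1"
    using power_prime_power_double_exp[OF assms(1)] k \<open>odd k\<close>
    by (intro square_eq_one_if_power_three_half_eq_one)
qed

end

theorem theorem2p4:
  fixes p n q :: nat and \<theta> :: "'a::{field,finite}"
  assumes "prime p" and "odd p" and "n > 0" and "q = p ^ n"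
    and "card (UNIV :: 'a set) = q ^ 2"
    and "\<theta> \<noteq> 0"
    and "\<not> (\<exists>y \<in> subfield_q q. y ^ 2 = \<theta> ^ (q + 1))"
  shows "(\<forall>f :: 'a \<Rightarrow> 'a. planar f \<and>
            (\<forall>c. card {x. f x = c} = card {y. y ^ 2 = c})
            \<longrightarrow> is_unital q f (U_theta q \<theta>))
    \<and> is_unital q (\<lambda>x. x ^ 2) (U_theta q \<theta>)
    \<and> (\<forall>k. 1 \<le> k \<and> k \<le> n \<and> odd ((2 * n) div gcd (2 * n) k)
            \<longrightarrow> is_unital q (\<lambda>x. x ^ (p ^ k + 1)) (U_theta q \<theta>))
    \<and> (p = 3 \<longrightarrow> (\<forall>k. gcd k (2 * n) = 1
            \<longrightarrow> is_unital q (\<lambda>x. x ^ ((3 ^ k + 1) div 2)) (U_theta q \<theta>)))"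
proof -
  interpret U_theta_setting q "TYPE('a)" \<theta>
    using gf_q2_prime_power[of p n] assms by (simp add: U_theta_setting_def U_theta_setting_axioms_def)
  show ?thesis
  proof (intro conjI allI impI)
    fix f :: "'a \<Rightarrow> 'a"
    assume "planar f \<and> (\<forall>c. card {x. f x = c} = card {y. y ^ 2 = c})"
    then show "is_unital q f (U_theta q \<theta>)"
      by (intro U_theta_is_unital) (simp add: vimage_def)
  next
    show "is_unital q (\<lambda>x. x ^ 2) (U_theta q \<theta>)"
      by (rule U_theta_is_unital) (rule refl)
  next
    fix k
    assume "1 \<le> k \<and> k \<le> n \<and> odd ((2 * n) div gcd (2 * n) k)"
    then show "is_unital q (\<lambda>x. x ^ (p ^ k + 1)) (U_theta q \<theta>)"
      using assms(2,4) by (intro power_prime_power_plus_one_is_unital) auto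
  next
    fix k
    assume "p = 3" and "gcd k (2 * n) = 1"
    then show "is_unital q (\<lambda>x. x ^ ((3 ^ k + 1) div 2)) (U_theta q \<theta>)"
      using assms(4) by (intro power_three_half_is_unital) simp_all
  qed
qed

end
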